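(* Let $\mathcal P,\mathcal Q$ be sets of propositional letters and let $(M,X)$, $(N,Y)$ be team models with $(M,X)\rightleftharpoons_{\mathcal P\cap\mathcal Q}(N,Y)$. Then there is a team model $(K,Z)$ such that $(M,X)\rightleftharpoons_{\mathcal P}(K,Z)$ and $(K,Z)\rightleftharpoons_{\mathcal Q}(N,Y)$.
   Context: A Kripke model is $M=(W,R,V)$ with $W$ nonempty, $R\subseteq W\times W$, $V:W\to\mathcal P(Prop)$; a team model is $(M,X)$ with $X\subseteq W$. For a set $\mathcal P$ of letters, a $\mathcal P$-bisimulation between $M=(W,R,V)$ and $M'=(W',R',V')$ is $B\subseteq W\times W'$ such that for all $(v,v')\in B$: $V(v)\cap\mathcal P=V'(v')\cap\mathcal P$; if $vRu$ there is $u'$ with $v'R'u'$ and $(u,u')\in B$; if $v'R'u'$ there is $u$ with $vRu$ and $(u,u')\in B$. $(M,w)\rightleftharpoons_{\mathcal P}(M',w')$ means some $\mathcal P$-bisimulation contains $(w,w')$. Team models are $\mathcal P$-bisimilar, $(M,X)\rightleftharpoons_{\mathcal P}(N,Y)$, if for every $x\in X$ there is $y\in Y$ with $(M,x)\rightleftharpoons_{\mathcal P}(N,y)$ and for every $y\in Y$ there is $x\in X$ with $(M,x)\rightleftharpoons_{\mathcal P}(N,y)$. *)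

theory Defs
  imports Main
begin

record ('w, 'p) kmodel =
  worlds :: "'w set"
  rel :: "('w \<times> 'w) set"
  val :: "'w \<Rightarrow> 'p set"

definition kripke_model :: "('w, 'p) kmodel \<Rightarrow> bool" where
  "kripke_model M \<longleftrightarrow> worlds M \<noteq> {} \<and> rel M \<subseteq> worlds M \<times> worlds M"

definition team_model :: "('w, 'p) kmodel \<Rightarrow> 'w set \<Rightarrow> bool" where
  "team_model M X \<longleftrightarrow> kripke_model M \<and> X \<subseteq> worlds M"

definition is_bisim :: "'p set \<Rightarrow> ('w, 'p) kmodel \<Rightarrow> ('v, 'p) kmodel \<Rightarrow> ('w \<times> 'v) set \<Rightarrow> bool" where
  "is_bisim P M M' B \<longleftrightarrow> B \<subseteq> worlds M \<times> worlds M' \<and>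
     (\<forall>(v, v') \<in> B.
        val M v \<inter> P = val M' v' \<inter> P \<and>
        (\<forall>u. (v, u) \<in> rel M \<longrightarrow> (\<exists>u'. (v', u') \<in> rel M' \<and> (u, u') \<in> B)) \<and>
        (\<forall>u'. (v', u') \<in> rel M' \<longrightarrow> (\<exists>u. (v, u) \<in> rel M \<and> (u, u') \<in> B)))"

definition pt_bisimilar :: "'p set \<Rightarrow> ('w, 'p) kmodel \<Rightarrow> 'w \<Rightarrow> ('v, 'p) kmodel \<Rightarrow> 'v \<Rightarrow> bool" where
  "pt_bisimilar P M w M' w' \<longleftrightarrow> (\<exists>B. is_bisim P M M' B \<and> (w, w') \<in> B)"

definition team_bisimilar :: "'p set \<Rightarrow> ('w, 'p) kmodel \<Rightarrow> 'w set \<Rightarrow> ('v, 'p) kmodel \<Rightarrow> 'v set \<Rightarrow> bool" where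
  "team_bisimilar P M X N Y \<longleftrightarrow>
     (\<forall>x \<in> X. \<exists>y \<in> Y. pt_bisimilar P M x N y) \<and>
     (\<forall>y \<in> Y. \<exists>x \<in> X. pt_bisimilar P M x N y)"

end

theory Submission
  imports Defs
begin

text \<open>Let \<open>S\<close> be the largest \<open>P \<inter> Q\<close>-bisimulation between \<open>M\<close> and \<open>N\<close>. Build the
  product model \<open>K\<close> of \<open>M\<close> and \<open>N\<close> whose successors are componentwise successors staying in \<open>S\<close>,
  taking the \<open>P\<close>-letters of a pair from its \<open>M\<close>-component and the \<open>Q\<close>-letters from its
  \<open>N\<close>-component; this is consistent because the components agree on \<open>P \<inter> Q\<close>. The forth and back
  conditions of \<open>S\<close> make the first projection a \<open>P\<close>-bisimulation from \<open>M\<close> to \<open>K\<close> and the second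
  projection a \<open>Q\<close>-bisimulation from \<open>K\<close> to \<open>N\<close>; the team \<open>Z\<close> consists of the \<open>S\<close>-linked pairs
  of \<open>X \<times> Y\<close>.\<close>

lemma is_bisim_Union:
  assumes "\<And>B. B \<in> \<B> \<Longrightarrow> is_bisim P M N B"
  shows "is_bisim P M N (\<Union>\<B>)"
  using assms unfolding is_bisim_def by (fastforce simp: subset_iff)

lemma is_bisim_pt_bisimilar: "is_bisim P M N {(w, v). pt_bisimilar P M w N v}"
proof -
  have "{(w, v). pt_bisimilar P M w N v} = \<Union>{B. is_bisim P M N B}"
    unfolding pt_bisimilar_def by blast
  then show ?thesis by (metis (mono_tags) is_bisim_Union mem_Collect_eq)
qed

text \<open>All pairs are worlds, so that \<open>K\<close> is nonempty even if \<open>S\<close> is.\<close>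

definition amalgam ::
  "'p set \<Rightarrow> 'p set \<Rightarrow> ('w, 'p) kmodel \<Rightarrow> ('v, 'p) kmodel \<Rightarrow> ('w \<times> 'v) set \<Rightarrow> ('w \<times> 'v, 'p) kmodel"
where
  "amalgam P Q M N S =
     \<lparr>worlds = worlds M \<times> worlds N,
      rel = {((w, v), (w', v')). (w, w') \<in> rel M \<and> (v, v') \<in> rel N \<and> (w', v') \<in> S},
      val = (\<lambda>(w, v). val M w \<inter> P \<union> val N v \<inter> Q)\<rparr>"

lemma kripke_model_amalgam:
  assumes "kripke_model M" and "kripke_model N"
  shows "kripke_model (amalgam P Q M N S)"
  using assms unfolding kripke_model_def amalgam_def by auto

lemma is_bisim_fst_amalgam:
  assumes S: "is_bisim (P \<inter> Q) M N S"
  shows "is_bisim P M (amalgam P Q M N S) {(w, (w, v)) | w v. (w, v) \<in> S}"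
proof -
  have agree: "val M w \<inter> P = (val M w \<inter> P \<union> val N v \<inter> Q) \<inter> P"
    and forth: "(w, u) \<in> rel M \<Longrightarrow> \<exists>u'. (v, u') \<in> rel N \<and> (u, u') \<in> S"
    if "(w, v) \<in> S" for w v u
    using S that unfolding is_bisim_def by blast+
  have "S \<subseteq> worlds M \<times> worlds N"
    using S unfolding is_bisim_def by blast
  with agree forth show ?thesis
    unfolding is_bisim_def amalgam_def by fastforce
qed

lemma is_bisim_snd_amalgam:
  assumes S: "is_bisim (P \<inter> Q) M N S"
  shows "is_bisim Q (amalgam P Q M N S) N {((w, v), v) | w v. (w, v) \<in> S}"
proof -
  have agree: "(val M w \<inter> P \<union> val N v \<inter> Q) \<inter> Q = val N v \<inter> Q"
    and back_step: "(v, u') \<in> rel N \<Longrightarrow> \<exists>u. (w, u) \<in> rel M \<and> (u, u') \<in> S"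
    if "(w, v) \<in> S" for w v u'
    using S that unfolding is_bisim_def by blast+
  have "S \<subseteq> worlds M \<times> worlds N"
    using S unfolding is_bisim_def by blast
  with agree back_step show ?thesis
    unfolding is_bisim_def amalgam_def by fastforce
qed

lemma team_bisimilar_amalgam:
  assumes S: "is_bisim (P \<inter> Q) M N S"
    and X: "\<forall>x \<in> X. \<exists>y \<in> Y. (x, y) \<in> S" and Y: "\<forall>y \<in> Y. \<exists>x \<in> X. (x, y) \<in> S"
  shows "team_bisimilar P M X (amalgam P Q M N S) (X \<times> Y \<inter> S)"
    and "team_bisimilar Q (amalgam P Q M N S) (X \<times> Y \<inter> S) N Y"
proof -
  have to_fst: "pt_bisimilar P M w (amalgam P Q M N S) (w, v)" if "(w, v) \<in> S" for w v
    using is_bisim_fst_amalgam[OF S] that unfolding pt_bisimilar_def by blast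
  have to_snd: "pt_bisimilar Q (amalgam P Q M N S) (w, v) N v" if "(w, v) \<in> S" for w v
    using is_bisim_snd_amalgam[OF S] that unfolding pt_bisimilar_def by blast
  show "team_bisimilar P M X (amalgam P Q M N S) (X \<times> Y \<inter> S)"
    unfolding team_bisimilar_def using X to_fst by fastforce
  show "team_bisimilar Q (amalgam P Q M N S) (X \<times> Y \<inter> S) N Y"
    unfolding team_bisimilar_def using Y to_snd by fastforce
qed

theorem mainTheorem4:
  fixes P Q :: "'p set"
    and M :: "('w, 'p) kmodel" and X :: "'w set"
    and N :: "('v, 'p) kmodel" and Y :: "'v set"
  assumes "team_model M X" and "team_model N Y"
    and "team_bisimilar (P \<inter> Q) M X N Y"
  shows "\<exists>(K :: ('w \<times> 'v, 'p) kmodel) Z. team_model K Z \<and>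
           team_bisimilar P M X K Z \<and> team_bisimilar Q K Z N Y"
proof -
  define S where "S = {(w, v). pt_bisimilar (P \<inter> Q) M w N v}"
  have S: "is_bisim (P \<inter> Q) M N S"
    unfolding S_def by (rule is_bisim_pt_bisimilar)
  have "\<forall>x \<in> X. \<exists>y \<in> Y. (x, y) \<in> S" and "\<forall>y \<in> Y. \<exists>x \<in> X. (x, y) \<in> S"
    using assms(3) unfolding team_bisimilar_def S_def by auto
  note teams = team_bisimilar_amalgam[OF S this]
  have "team_model (amalgam P Q M N S) (X \<times> Y \<inter> S)"
    using assms(1,2) kripke_model_amalgam unfolding team_model_def
    by (auto simp: amalgam_def)
  with teams show ?thesis by blast
qed

end
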